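(* Let $\vec k=(k_1,\dots,k_\ell)$ be a vector of positive integers and let $F$ be a tableau filled bijectively with the labels $1,2,\dots,|\vec k|+\ell$, with $\ell$ top-justified columns, the $i$-th column containing $k_i+1$ entries, such that the entries of the first row increase from left to right and each column increases from top to bottom. Then $F=\eta_*(\pi)$ for some $\pi\in\mathcal{D}_{\vec k}$ if and only if for every pair of entries $a,d$ with $d$ immediately below $a$ in $F$ and $a<d-1$, the set of labels $\{a+1,a+2,\dots,d-1\}$ is a union of entire columns of $F$.
   Context: $|\vec k|=k_1+\cdots+k_\ell$, $N=|\vec k|+\ell$. A $\vec k$-Dyck path is a word $\pi=\pi_1\cdots\pi_N$ containing the letters $S^{k_1},\dots,S^{k_\ell}$ exactly once each and in this order, together with $|\vec k|$ letters $W$, such that all starting ranks are nonnegative, where $r_1=0$, $r_{i+1}=r_i+k_j$ if $\pi_i=S^{k_j}$ and $r_{i+1}=r_i-1$ if $\pi_i=W$. $\mathcal D_{\vec k}$ is the set of such paths. Filling algorithm $\eta_*$: in a tableau of $\ell$ top-justified columns, column $i$ having $k_i+1$ cells, place $1$ at the top of column 1; for $i=2,\dots,N$, call an entry active if it is currently the bottom entry of a column $i'$ not yet containing $k_{i'}+1$ entries; if $\pi_i=W$ place $i$ immediately below the largest active entry, otherwise place $i$ at the top of the first empty column. The resulting tableau is $\eta_*(\pi)$. *)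

theory Defs
  imports Main
begin

text \<open>Letters of a k-Dyck path: W, or S j standing for the letter S^{k_(j+1)}
  (columns / letters are indexed from 0).\<close>
datatype letter = W | S nat

fun rank_step :: "nat list \<Rightarrow> letter \<Rightarrow> int" where
  "rank_step k W = -1"
| "rank_step k (S j) = int (k ! j)"

definition dyck_paths :: "nat list \<Rightarrow> letter list set" where
  "dyck_paths k = {\<pi>.
      filter (\<lambda>x. x \<noteq> W) \<pi> = map S [0..<length k]
    \<and> length (filter (\<lambda>x. x = W) \<pi>) = sum_list k
    \<and> (\<forall>i < length \<pi>. 0 \<le> sum_list (map (rank_step k) (take i \<pi>)))}"

text \<open>Tableaux are lists of columns (each column a list of entries, top to bottom).
  Active columns: nonempty and not yet full.\<close>
definition active_cols :: "nat list \<Rightarrow> nat list list \<Rightarrow> nat set" where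
  "active_cols k T = {c. c < length T \<and> T ! c \<noteq> [] \<and> length (T ! c) < k ! c + 1}"

fun fill_step :: "nat list \<Rightarrow> nat \<Rightarrow> letter \<Rightarrow> nat list list \<Rightarrow> nat list list" where
  "fill_step k i W T =
     (let A = active_cols k T in
      if A = {} then T
      else let c = (LEAST c. c \<in> A \<and> (\<forall>c'\<in>A. last (T ! c') \<le> last (T ! c)))
           in T[c := T ! c @ [i]])"
| "fill_step k i (S j) T =
     (if \<exists>c < length T. T ! c = [] then
        (let c = (LEAST c. c < length T \<and> T ! c = []) in T[c := [i]])
      else T)"

text \<open>The filling map eta_*: place 1 at the top of column 1, then process
  letters 2..N.\<close>
definition eta :: "nat list \<Rightarrow> letter list \<Rightarrow> nat list list" where
  "eta k \<pi> = fold (\<lambda>(i, x) T. fill_step k i x T)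
                   (zip [2..<length \<pi> + 1] (drop 1 \<pi>))
                   ((replicate (length k) [])[0 := [1]])"

end

theory Submission
  imports Defs
begin

(* The filling algorithm builds its tableau one label at a time, so the entries at most m of
   eta_*(pi) form the tableau produced by the first m letters of pi. Hence F is in the image
   of eta_* iff every label d sits where the algorithm puts it at time d. For a top entry this
   is automatic, as the first row increases. For d directly below a it says that a is the
   largest active bottom entry at time d - 1, which fails exactly when another column has an
   entry b with a < b < d and is still unfinished, i.e. also has an entry e >= d. Excluding
   such crossings is equivalent to every gap {a+1, ..., d-1} being a union of columns.
   Conversely, for a crossing-free F the word reading S^{k_j} at the top of column j and W at
   every other label drives the algorithm to F, and it is a Dyck path because its rank after
   m letters is the number of empty cells in the started columns of the entries at most m. *)

lemma step_across_threshold: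
  fixes f :: "nat \<Rightarrow> 'a::linorder"
  assumes "i < j" "f i < a" "a \<le> f j"
  shows "\<exists>s. i \<le> s \<and> s < j \<and> f s < a \<and> a \<le> f (Suc s)"
  using assms
proof (induction j)
  case (Suc j)
  show ?case
  proof (cases "f j < a")
    case True
    with Suc.prems show ?thesis by (intro exI[of _ j]) auto
  next
    case False
    with Suc.prems have "i < j" by (metis less_SucE)
    then obtain s where "i \<le> s" "s < j" "f s < a" "a \<le> f (Suc s)"
      using Suc.IH Suc.prems False by (auto simp: not_less)
    then show ?thesis by (intro exI[of _ s]) auto
  qed
qed simp

lemma sorted_filter_le_eq_take:
  fixes xs :: "'a::linorder list"
  assumes "sorted xs" "n \<le> length xs" "\<forall>i<n. xs ! i \<le> t" "n < length xs \<longrightarrow> t < xs ! n"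
  shows "filter (\<lambda>x. x \<le> t) xs = take n xs"
proof -
  have "filter (\<lambda>x. x \<le> t) (take n xs) = take n xs"
    using assms(3) by (auto simp: filter_id_conv in_set_conv_nth)
  moreover have "filter (\<lambda>x. x \<le> t) (drop n xs) = []"
  proof -
    have "t < x" if "x \<in> set (drop n xs)" for x
    proof -
      obtain i where "i < length (drop n xs)" "x = drop n xs ! i"
        using \<open>x \<in> set (drop n xs)\<close> by (metis in_set_conv_nth)
      then show ?thesis using assms(4) sorted_nth_mono[OF assms(1), of n "n + i"]
        by (auto intro: order.strict_trans2)
    qed
    then show ?thesis by (force simp: filter_empty_conv)
  qed
  ultimately show ?thesis by (metis append_Nil2 append_take_drop_id filter_append)
qed

lemma sorted_le_last:
  fixes xs :: "'a::linorder list"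
  assumes "sorted xs" "x \<in> set xs"
  shows "x \<le> last xs"
proof -
  obtain i where "i < length xs" "xs ! i = x" using assms(2) by (auto simp: in_set_conv_nth)
  moreover have "xs \<noteq> []" using assms(2) by auto
  ultimately show ?thesis using sorted_nth_mono[OF assms(1), of i "length xs - 1"]
    by (auto simp: last_conv_nth)
qed

lemma sorted_wrt_less_not_between:
  fixes xs :: "'a::linorder list"
  assumes "sorted_wrt (<) xs" "Suc r < length xs" "xs ! r < b" "b < xs ! Suc r"
  shows "b \<notin> set xs"
proof
  assume "b \<in> set xs"
  then obtain i where i: "i < length xs" "xs ! i = b" by (auto simp: in_set_conv_nth)
  have "sorted xs" using assms(1) strict_sorted_iff by blast
  then show False
    using sorted_nth_mono[of xs i r] sorted_nth_mono[of xs "Suc r" i] i assms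
    by (cases "i \<le> r") auto
qed

lemma distinct_concat_disjoint_nth:
  assumes "distinct (concat xs)" "i < length xs" "j < length xs" "i \<noteq> j"
  shows "set (xs ! i) \<inter> set (xs ! j) = {}"
proof -
  have *: "set (xs ! i) \<inter> set (xs ! j) = {}" if "i < j" "j < length xs" for i j
  proof -
    have "xs = take j xs @ xs ! j # drop (Suc j) xs"
      using that(2) by (simp add: id_take_nth_drop)
    then have "distinct (concat (take j xs) @ xs ! j @ concat (drop (Suc j) xs))"
      using assms(1) by (metis concat.simps(2) concat_append)
    then have "set (concat (take j xs)) \<inter> set (xs ! j) = {}" by auto
    moreover have "xs ! i \<in> set (take j xs)" using that by (auto simp: in_set_conv_nth)
    ultimately show ?thesis by auto
  qed
  show ?thesis using *[of i j] *[of j i] assms by (cases "i < j") auto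
qed

lemma sum_nth_list_update:
  fixes g :: "nat \<Rightarrow> 'a \<Rightarrow> 'b::ab_group_add"
  assumes "c < n" "n \<le> length T"
  shows "(\<Sum>i<n. g i (T[c := v] ! i)) = (\<Sum>i<n. g i (T ! i)) + (g c v - g c (T ! c))"
proof -
  have "(\<Sum>i<n. g i (T[c := v] ! i))
      = (\<Sum>i<n. g i (T ! i) + (if i = c then g c v - g c (T ! c) else 0))"
    using assms by (intro sum.cong) (auto simp: nth_list_update)
  also have "\<dots> = (\<Sum>i<n. g i (T ! i)) + (g c v - g c (T ! c))"
    using assms by (simp add: sum.distrib)
  finally show ?thesis .
qed

section \<open>The filling algorithm\<close>

lemma fill_step_W:
  assumes "active_cols k T \<noteq> {}"
  obtains c where "c \<in> active_cols k T" "\<forall>c'\<in>active_cols k T. last (T ! c') \<le> last (T ! c)"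
    "fill_step k i W T = T[c := T ! c @ [i]]"
proof -
  define A where "A = active_cols k T"
  define c where "c = (LEAST c. c \<in> A \<and> (\<forall>c'\<in>A. last (T ! c') \<le> last (T ! c)))"
  have "finite A" unfolding A_def active_cols_def by simp
  then have "Max ((\<lambda>c. last (T ! c)) ` A) \<in> (\<lambda>c. last (T ! c)) ` A"
    using assms by (intro Max_in) (auto simp: A_def)
  then obtain c0 where "c0 \<in> A" "Max ((\<lambda>c. last (T ! c)) ` A) = last (T ! c0)"
    by blast
  with \<open>finite A\<close> have "\<exists>c. c \<in> A \<and> (\<forall>c'\<in>A. last (T ! c') \<le> last (T ! c))"
    by (intro exI[of _ c0]) (auto simp: eq_commute)
  then have "c \<in> A \<and> (\<forall>c'\<in>A. last (T ! c') \<le> last (T ! c))"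
    unfolding c_def by (rule LeastI_ex)
  moreover have "fill_step k i W T = T[c := T ! c @ [i]]"
    using assms unfolding fill_step.simps Let_def A_def[symmetric] c_def by simp
  ultimately show ?thesis using that unfolding A_def by blast
qed

lemma fill_step_cases:
  obtains "fill_step k i x T = T" | c where "fill_step k i x T = T[c := T ! c @ [i]]"
proof (cases x)
  case W
  show ?thesis
  proof (cases "active_cols k T = {}")
    case True
    then show ?thesis using that(1) by (simp add: W)
  next
    case False
    then show ?thesis using that(2) fill_step_W unfolding W by metis
  qed
next
  case (S j)
  show ?thesis
  proof (cases "\<exists>c < length T. T ! c = []")
    case True
    define c where "c = (LEAST c. c < length T \<and> T ! c = [])"
    have "T ! c = []" using LeastI_ex[OF True] unfolding c_def by simp
    then have "fill_step k i x T = T[c := T ! c @ [i]]" using True by (simp add: S c_def)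
    then show ?thesis by (rule that(2))
  next
    case False
    show ?thesis by (rule that(1)) (simp only: S fill_step.simps if_not_P[OF False])
  qed
qed

lemma fill_step_appends_to_max_active:
  assumes "c < length T" "T ! c \<noteq> []" "fill_step k i x T ! c = T ! c @ [i]"
  shows "c \<in> active_cols k T \<and> (\<forall>c'\<in>active_cols k T. last (T ! c') \<le> last (T ! c))"
proof (cases x)
  case (S j)
  have "fill_step k i x T ! c = T ! c"
  proof (cases "\<exists>c<length T. T ! c = []")
    case True
    define c1 where "c1 = (LEAST c. c < length T \<and> T ! c = [])"
    have "T ! c1 = []" using LeastI_ex[OF True] unfolding c1_def by simp
    then have "c1 \<noteq> c" using assms(2) by auto
    have "fill_step k i x T = T[c1 := [i]]" using True by (simp add: S c1_def)
    then show ?thesis using \<open>c1 \<noteq> c\<close> by simp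
  next
    case False
    show ?thesis by (simp only: S fill_step.simps if_not_P[OF False])
  qed
  then show ?thesis using assms(3) by simp
next
  case W
  have "active_cols k T \<noteq> {}"
  proof
    assume "active_cols k T = {}"
    then have "fill_step k i x T = T" by (simp add: W)
    then show False using assms(3) by simp
  qed
  then obtain c1 where c1: "c1 \<in> active_cols k T"
    "\<forall>c'\<in>active_cols k T. last (T ! c') \<le> last (T ! c1)"
    and step: "fill_step k i x T = T[c1 := T ! c1 @ [i]]"
    unfolding W by (rule fill_step_W)
  have "c1 = c"
  proof (rule ccontr)
    assume "c1 \<noteq> c"
    then have "fill_step k i x T ! c = T ! c" unfolding step by simp
    then show False using assms(3) by simp
  qed
  then show ?thesis using c1 by simp
qed

lemma fill_step_W_unique_max:
  assumes "c \<in> active_cols k T" "\<forall>c'\<in>active_cols k T. c' \<noteq> c \<longrightarrow> last (T ! c') < last (T ! c)"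
  shows "fill_step k i W T = T[c := T ! c @ [i]]"
proof -
  obtain c1 where c1: "c1 \<in> active_cols k T" "\<forall>c'\<in>active_cols k T. last (T ! c') \<le> last (T ! c1)"
    and step: "fill_step k i W T = T[c1 := T ! c1 @ [i]]"
    by (rule fill_step_W) (use assms(1) in blast)
  have "c1 = c"
  proof (rule ccontr)
    assume "c1 \<noteq> c"
    then have "last (T ! c1) < last (T ! c)" using assms(2) c1(1) by blast
    then show False using c1(2) assms(1) by fastforce
  qed
  then show ?thesis using step by simp
qed

lemma fill_step_S_first_empty:
  assumes "c < length T" "T ! c = []" "\<forall>c'<c. T ! c' \<noteq> []"
  shows "fill_step k i (S j) T = T[c := [i]]"
proof -
  have "(LEAST c. c < length T \<and> T ! c = []) = c"
  proof (rule Least_equality)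
    fix y assume "y < length T \<and> T ! y = []"
    then show "c \<le> y" using assms(3) not_le by blast
  qed (use assms in simp)
  then show ?thesis using assms(1,2) by auto
qed

definition trunc :: "nat \<Rightarrow> nat list list \<Rightarrow> nat list list" where
  "trunc m T = map (filter (\<lambda>x. x \<le> m)) T"

lemma length_trunc [simp]: "length (trunc m T) = length T"
  by (simp add: trunc_def)

lemma nth_trunc: "c < length T \<Longrightarrow> trunc m T ! c = filter (\<lambda>x. x \<le> m) (T ! c)"
  by (simp add: trunc_def)

lemma trunc_id: "\<forall>x\<in>set (concat T). x \<le> m \<Longrightarrow> trunc m T = T"
  unfolding trunc_def by (rule map_idI) auto

lemma trunc_trunc: "m \<le> m' \<Longrightarrow> trunc m (trunc m' T) = trunc m T"
  unfolding trunc_def by (auto intro: filter_cong)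

lemma set_concat_fill_step: "set (concat (fill_step k i x T)) \<subseteq> insert i (set (concat T))"
proof (cases rule: fill_step_cases[of k i x T])
  case (2 c)
  show ?thesis
  proof (cases "c < length T")
    case True
    then have "T ! c \<in> set T" by simp
    then show ?thesis unfolding 2 using set_update_subset_insert[of T c "T ! c @ [i]"] by fastforce
  qed (use 2 in \<open>auto simp: list_update_beyond\<close>)
qed auto

lemma trunc_fill_step:
  assumes "\<forall>x\<in>set (concat T). x \<le> m"
  shows "trunc m (fill_step k (Suc m) x T) = T"
proof (cases rule: fill_step_cases[of k "Suc m" x T])
  case 1
  then show ?thesis using trunc_id[OF assms] by simp
next
  case (2 c)
  have "trunc m (T[c := T ! c @ [Suc m]]) = T"
  proof (cases "c < length T")
    case True
    then have "filter (\<lambda>x. x \<le> m) (T ! c) = T ! c"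
      using assms nth_mem[OF True] by (auto simp: filter_id_conv)
    then show ?thesis using trunc_id[OF assms] unfolding trunc_def by (simp add: map_update)
  qed (simp add: list_update_beyond trunc_id[OF assms])
  then show ?thesis using 2 by simp
qed

lemma eta_take_one: "eta k (take 1 \<pi>) = (replicate (length k) [])[0 := [1]]"
  by (simp add: eta_def)

lemma eta_take_Suc:
  assumes "1 \<le> m" "m < length \<pi>"
  shows "eta k (take (Suc m) \<pi>) = fill_step k (Suc m) (\<pi> ! m) (eta k (take m \<pi>))"
proof -
  have "[2..<length (take (Suc m) \<pi>) + 1] = [2..<length (take m \<pi>) + 1] @ [Suc m]"
    using assms by simp
  moreover have "drop 1 (take (Suc m) \<pi>) = drop 1 (take m \<pi>) @ [\<pi> ! m]"
    using assms by (simp add: take_Suc_conv_app_nth)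
  moreover have "length [2..<length (take m \<pi>) + 1] = length (drop 1 (take m \<pi>))"
    using assms by auto
  ultimately show ?thesis unfolding eta_def by simp
qed

lemma eta_take_labels_le:
  assumes "1 \<le> m" "m \<le> length \<pi>"
  shows "\<forall>x\<in>set (concat (eta k (take m \<pi>))). x \<le> m"
  using assms(1)
proof (induction rule: dec_induct)
  case base
  have "set (concat (eta k (take 1 \<pi>))) \<subseteq> {1}"
    unfolding eta_take_one
    using set_update_subset_insert[of "replicate (length k) []" 0 "[1::nat]"] by auto
  then show ?case by auto
next
  case (step n)
  have "eta k (take (Suc n) \<pi>) = fill_step k (Suc n) (\<pi> ! n) (eta k (take n \<pi>))"
    using step.hyps assms(2) by (simp add: eta_take_Suc)
  moreover have "\<forall>x\<in>insert (Suc n) (set (concat (eta k (take n \<pi>)))). x \<le> Suc n"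
    using step.IH by (auto intro: le_SucI)
  ultimately show ?case
    using set_concat_fill_step[of k "Suc n" "\<pi> ! n" "eta k (take n \<pi>)"] by (metis subsetD)
qed

lemma trunc_eta_take:
  assumes "1 \<le> m" "m \<le> m'" "m' \<le> length \<pi>"
  shows "trunc m (eta k (take m' \<pi>)) = eta k (take m \<pi>)"
  using assms(2,3)
proof (induction rule: dec_induct)
  case base
  show ?case by (rule trunc_id) (use eta_take_labels_le assms(1) base in auto)
next
  case (step n)
  have n: "1 \<le> n" "n < length \<pi>" using step assms(1) by auto
  then have "eta k (take (Suc n) \<pi>) = fill_step k (Suc n) (\<pi> ! n) (eta k (take n \<pi>))"
    by (rule eta_take_Suc)
  then have last_step: "trunc n (eta k (take (Suc n) \<pi>)) = eta k (take n \<pi>)"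
    using trunc_fill_step[OF eta_take_labels_le[OF n(1) less_imp_le[OF n(2)]]] by simp
  have "trunc m (eta k (take (Suc n) \<pi>)) = trunc m (trunc n (eta k (take (Suc n) \<pi>)))"
    using step.hyps by (simp add: trunc_trunc)
  also have "\<dots> = trunc m (eta k (take n \<pi>))" using last_step by simp
  also have "\<dots> = eta k (take m \<pi>)" using step.IH n by simp
  finally show ?case .
qed

lemma dyck_paths_length:
  assumes "\<pi> \<in> dyck_paths k"
  shows "length \<pi> = sum_list k + length k"
proof -
  have "filter (\<lambda>x. x \<noteq> W) \<pi> = map S [0..<length k]"
    and "length (filter (\<lambda>x. x = W) \<pi>) = sum_list k"
    using assms unfolding dyck_paths_def by auto
  then show ?thesis using sum_length_filter_compl[of "\<lambda>x. x = W" \<pi>] by simp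
qed

section \<open>Increasing tableaux\<close>

locale increasing_tableau =
  fixes k :: "nat list" and F :: "nat list list"
  assumes length_F: "length F = length k"
    and length_column: "\<forall>i < length k. length (F ! i) = k ! i + 1"
    and distinct_entries: "distinct (concat F)"
    and set_entries: "set (concat F) = {1 .. sum_list k + length k}"
    and first_row_increasing: "\<forall>i j. i < j \<and> j < length k \<longrightarrow> F ! i ! 0 < F ! j ! 0"
    and column_increasing: "\<forall>i < length k. sorted_wrt (<) (F ! i)"
begin

lemma column_nonempty: "c < length k \<Longrightarrow> F ! c \<noteq> []"
  using length_column by fastforce

lemma column_sorted: "c < length k \<Longrightarrow> sorted (F ! c)"
  using column_increasing strict_sorted_iff by blast

lemma column_unique:
  assumes "c < length k" "c' < length k" "x \<in> set (F ! c)" "x \<in> set (F ! c')"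
  shows "c = c'"
  using distinct_concat_disjoint_nth[OF distinct_entries, of c c'] assms length_F by auto

lemma entry_label:
  assumes "c < length k" "x \<in> set (F ! c)"
  shows "x \<in> {1 .. sum_list k + length k}"
  using assms set_entries length_F by (auto simp flip: set_entries)

lemma label_position:
  assumes "x \<in> {1 .. sum_list k + length k}"
  obtains c r where "c < length k" "r < length (F ! c)" "F ! c ! r = x"
proof -
  have "x \<in> set (concat F)" using assms set_entries by simp
  then obtain ys where "ys \<in> set F" "x \<in> set ys" by auto
  then obtain c where c: "c < length k" "x \<in> set (F ! c)"
    using length_F by (metis in_set_conv_nth)
  then obtain r where "r < length (F ! c)" "F ! c ! r = x" by (auto simp: in_set_conv_nth)
  with c(1) show ?thesis by (rule that)
qed

lemma trunc_at_label:
  assumes "c < length k" "r < length (F ! c)" "F ! c ! r = Suc m"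
  shows "trunc m F ! c = take r (F ! c)"
    and "trunc (Suc m) F = (trunc m F)[c := take (Suc r) (F ! c)]"
proof -
  have less: "F ! c ! i \<le> m" if "i < r" for i
    using sorted_wrt_nth_less[of "(<)" "F ! c" i r] column_increasing assms that by auto
  show "trunc m F ! c = take r (F ! c)"
    using assms less length_F
    by (auto simp: nth_trunc intro!: sorted_filter_le_eq_take column_sorted)
  have "filter (\<lambda>x. x \<le> Suc m) (F ! c) = take (Suc r) (F ! c)"
  proof (rule sorted_filter_le_eq_take)
    show "Suc r < length (F ! c) \<longrightarrow> Suc m < F ! c ! Suc r"
      using sorted_wrt_nth_less[of "(<)" "F ! c" r "Suc r"] column_increasing assms by auto
  qed (use assms less column_sorted in \<open>auto simp: less_Suc_eq intro: le_SucI\<close>)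
  moreover have "filter (\<lambda>x. x \<le> Suc m) (F ! i) = filter (\<lambda>x. x \<le> m) (F ! i)"
    if "i < length k" "i \<noteq> c" for i
  proof -
    have "Suc m \<notin> set (F ! i)"
      using column_unique[OF assms(1) that(1)] nth_mem[OF assms(2)] assms(3) that by auto
    then show ?thesis by (auto intro: filter_cong simp: le_Suc_eq)
  qed
  ultimately show "trunc (Suc m) F = (trunc m F)[c := take (Suc r) (F ! c)]"
    using assms(1) length_F by (intro nth_equalityI) (auto simp: nth_trunc nth_list_update)
qed

lemma trunc_all: "trunc (sum_list k + length k) F = F"
  by (rule trunc_id) (simp only: set_entries, simp)

lemma trunc_zero: "trunc 0 F = replicate (length k) []"
proof (rule nth_equalityI)
  fix c assume "c < length (trunc 0 F)"
  then have "c < length k" using length_F by simp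
  then show "trunc 0 F ! c = replicate (length k) [] ! c"
    using entry_label by (fastforce simp: nth_trunc length_F filter_empty_conv)
qed (simp add: length_F)

lemma trunc_one:
  assumes "0 < length k"
  shows "trunc 1 F = (replicate (length k) [])[0 := [1]]"
proof -
  have "Suc 0 \<in> {1 .. sum_list k + length k}" using assms by (simp del: length_greater_0_conv)
  then obtain c r where pos: "c < length k" "r < length (F ! c)" "F ! c ! r = Suc 0"
    by (rule label_position)
  have "r = 0"
  proof (rule ccontr)
    assume "r \<noteq> 0"
    then have "F ! c ! 0 < F ! c ! r"
      using sorted_wrt_nth_less[of "(<)" "F ! c" 0 r] column_increasing pos by auto
    moreover have "F ! c ! 0 \<in> set (F ! c)" using column_nonempty[OF pos(1)] by simp
    then have "F ! c ! 0 \<ge> 1" using entry_label[OF pos(1)] by fastforce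
    ultimately show False using pos by simp
  qed
  have "c = 0"
  proof (rule ccontr)
    assume "c \<noteq> 0"
    then have "F ! 0 ! 0 < F ! c ! 0" using first_row_increasing pos by auto
    moreover have "F ! 0 ! 0 \<ge> 1" using entry_label[OF assms] column_nonempty[OF assms] by fastforce
    ultimately show False using pos \<open>r = 0\<close> by simp
  qed
  have "take 1 (F ! 0) = [1]" using pos \<open>r = 0\<close> \<open>c = 0\<close> by (cases "F ! 0") auto
  then show ?thesis
    using trunc_at_label(2)[OF pos] trunc_zero \<open>r = 0\<close> \<open>c = 0\<close> by simp
qed

section \<open>Noncrossing tableaux\<close>

definition noncrossing :: bool where
  "noncrossing \<longleftrightarrow> (\<forall>c r c' b e. c < length k \<longrightarrow> Suc r < length (F ! c) \<longrightarrow> c' < length k \<longrightarrow>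
     b \<in> set (F ! c') \<longrightarrow> e \<in> set (F ! c') \<longrightarrow> F ! c ! r < b \<longrightarrow> b < F ! c ! Suc r \<longrightarrow>
     e < F ! c ! Suc r)"

lemma noncrossingD:
  assumes "noncrossing" "c < length k" "Suc r < length (F ! c)" "c' < length k"
    "b \<in> set (F ! c')" "e \<in> set (F ! c')" "F ! c ! r < b" "b < F ! c ! Suc r"
  shows "e < F ! c ! Suc r"
  using assms unfolding noncrossing_def by blast

lemma column_within_gap:
  assumes "noncrossing" "c < length k" "Suc r < length (F ! c)" "c' < length k"
    "b \<in> set (F ! c')" "F ! c ! r < b" "b < F ! c ! Suc r"
  shows "set (F ! c') \<subseteq> {F ! c ! r <..< F ! c ! Suc r}"
proof
  fix y assume y: "y \<in> set (F ! c')"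
  define a d where "a = F ! c ! r" and "d = F ! c ! Suc r"
  have a: "a \<in> set (F ! c)" "a \<notin> set (F ! c')"
  proof -
    show "a \<in> set (F ! c)" using assms(3) unfolding a_def by simp
    have "c' \<noteq> c"
      using sorted_wrt_less_not_between[of "F ! c" r b] column_increasing assms by auto
    then show "a \<notin> set (F ! c')" using column_unique assms(2,4) \<open>a \<in> set (F ! c)\<close> by blast
  qed
  have "y < d" using noncrossingD[OF assms(1-5) y] assms(6,7) unfolding d_def by simp
  moreover have "a < y"
    \<comment> \<open>else two adjacent entries of column c' straddle a, and d violates noncrossing for them\<close>
  proof (rule ccontr)
    assume "\<not> a < y"
    then have "y < a" using a y by (cases "y = a") auto
    obtain iy ib where i: "iy < length (F ! c')" "F ! c' ! iy = y" "ib < length (F ! c')" "F ! c' ! ib = b"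
      using y assms(5) by (metis in_set_conv_nth)
    have "iy < ib"
      using sorted_nth_mono[OF column_sorted[OF assms(4)], of ib iy] i \<open>y < a\<close> assms(6) a_def
      by (metis leI order.strict_trans order.strict_iff_not)
    then obtain s where s: "iy \<le> s" "s < ib" "F ! c' ! s < a" "a \<le> F ! c' ! Suc s"
      using step_across_threshold[of iy ib "\<lambda>t. F ! c' ! t" a] i \<open>y < a\<close> assms(6) a_def by auto
    have "a \<noteq> F ! c' ! Suc s" using a(2) s i by auto
    then have "d < F ! c' ! Suc s"
      using noncrossingD[OF assms(1,4), of s c a d] s i a(1) assms(2,3) d_def by auto
    moreover have "F ! c' ! Suc s \<le> b"
      using sorted_nth_mono[OF column_sorted[OF assms(4)], of "Suc s" ib] s i by auto
    ultimately show False using assms(7) d_def by simp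
  qed
  ultimately show "y \<in> {F ! c ! r <..< F ! c ! Suc r}" unfolding a_def d_def by simp
qed

definition gaps_are_columns :: bool where
  "gaps_are_columns \<longleftrightarrow> (\<forall>i < length k. \<forall>r. r + 1 < length (F ! i) \<longrightarrow>
     F ! i ! r < F ! i ! (r + 1) - 1 \<longrightarrow>
     (\<exists>C \<subseteq> {..<length k}. {F ! i ! r + 1 .. F ! i ! (r + 1) - 1} = (\<Union>c\<in>C. set (F ! c))))"

lemma noncrossing_if_gaps_are_columns:
  assumes gaps_are_columns
  shows noncrossing
  unfolding noncrossing_def
proof (intro allI impI)
  fix c r c' b e
  assume c: "c < length k" "Suc r < length (F ! c)" and c': "c' < length k"
    and b: "b \<in> set (F ! c')" "F ! c ! r < b" "b < F ! c ! Suc r" and e: "e \<in> set (F ! c')"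
  have "r + 1 < length (F ! c)" "F ! c ! r < F ! c ! (r + 1) - 1" using c b(2,3) by auto
  then have "\<exists>C \<subseteq> {..<length k}. {F ! c ! r + 1 .. F ! c ! (r + 1) - 1} = (\<Union>c\<in>C. set (F ! c))"
    using assms c(1) unfolding gaps_are_columns_def by blast
  then obtain C where C: "C \<subseteq> {..<length k}"
    "{F ! c ! r + 1 .. F ! c ! Suc r - 1} = (\<Union>c\<in>C. set (F ! c))"
    by auto
  have "b \<in> {F ! c ! r + 1 .. F ! c ! Suc r - 1}" using b(2,3) by auto
  then obtain c'' where "c'' \<in> C" "b \<in> set (F ! c'')" unfolding C(2) by blast
  then have "c'' = c'" using column_unique[OF _ c' _ b(1)] C(1) by auto
  then have "e \<in> {F ! c ! r + 1 .. F ! c ! Suc r - 1}" using C(2) \<open>c'' \<in> C\<close> e by auto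
  then show "e < F ! c ! Suc r" by auto
qed

lemma gaps_are_columns_if_noncrossing:
  assumes noncrossing
  shows gaps_are_columns
  unfolding gaps_are_columns_def
proof (intro allI impI)
  fix c r assume c: "c < length k" "r + 1 < length (F ! c)"
  let ?gap = "{F ! c ! r + 1 .. F ! c ! (r + 1) - 1}"
  define C where "C = {c' \<in> {..<length k}. set (F ! c') \<inter> ?gap \<noteq> {}}"
  have "?gap \<subseteq> (\<Union>c\<in>C. set (F ! c))"
  proof
    fix x assume x: "x \<in> ?gap"
    then have "x \<in> {1 .. sum_list k + length k}"
      using entry_label[OF c(1), of "F ! c ! (r + 1)"] c(2) by auto
    then obtain c' r' where "c' < length k" "r' < length (F ! c')" "F ! c' ! r' = x"
      by (rule label_position)
    then show "x \<in> (\<Union>c\<in>C. set (F ! c))" using x unfolding C_def by force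
  qed
  moreover have "set (F ! c') \<subseteq> ?gap" if "c' \<in> C" for c'
  proof -
    have "c' < length k" "set (F ! c') \<inter> ?gap \<noteq> {}" using that unfolding C_def by auto
    then obtain b where b: "b \<in> set (F ! c')" "b \<in> ?gap" by blast
    then have "F ! c ! r < b" "b < F ! c ! Suc r" by auto
    then have "set (F ! c') \<subseteq> {F ! c ! r <..< F ! c ! Suc r}"
      using column_within_gap[OF assms c(1) _ \<open>c' < length k\<close> b(1)] c(2) by simp
    then show ?thesis by fastforce
  qed
  ultimately show "\<exists>C \<subseteq> {..<length k}. ?gap = (\<Union>c\<in>C. set (F ! c))"
    by (intro exI[of _ C]) (auto simp: C_def)
qed

lemma fill_step_eta_trunc:
  assumes "\<pi> \<in> dyck_paths k" "eta k \<pi> = F" "1 \<le> m" "m < sum_list k + length k"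
  shows "fill_step k (Suc m) (\<pi> ! m) (trunc m F) = trunc (Suc m) F"
proof -
  have m: "m < length \<pi>" using dyck_paths_length[OF assms(1)] assms(4) by simp
  have prefix: "eta k (take j \<pi>) = trunc j F" if "1 \<le> j" "j \<le> length \<pi>" for j
    using trunc_eta_take[OF that order.refl, of k] assms(2) by simp
  then show ?thesis
    using eta_take_Suc[OF assms(3) m, of k] prefix[of m] prefix[of "Suc m"] assms(3) m by simp
qed

lemma noncrossing_if_eta:
  assumes "\<pi> \<in> dyck_paths k" "eta k \<pi> = F"
  shows noncrossing
  unfolding noncrossing_def
proof (intro allI impI)
  fix c r c' b e
  assume c: "c < length k" "Suc r < length (F ! c)" and c': "c' < length k"
    and b: "b \<in> set (F ! c')" "F ! c ! r < b" "b < F ! c ! Suc r" and e: "e \<in> set (F ! c')"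
  obtain m where m: "F ! c ! Suc r = Suc m" using b(3) by (metis less_imp_Suc_add)
  have "F ! c ! r \<in> set (F ! c)" "F ! c ! Suc r \<in> set (F ! c)" using c(2) by auto
  then have "1 \<le> m" "m < sum_list k + length k"
    using entry_label[OF c(1)] b(2,3) m by fastforce+
  define T where "T = trunc m F"
  note step = fill_step_eta_trunc[OF assms \<open>1 \<le> m\<close> \<open>m < _\<close>, folded T_def]
  have Tc: "T ! c = take (Suc r) (F ! c)"
    using trunc_at_label(1)[OF c(1) _ m] c(2) unfolding T_def by simp
  have appended: "fill_step k (Suc m) (\<pi> ! m) T ! c = T ! c @ [Suc m]"
    using trunc_at_label(2)[OF c(1) _ m] c step Tc m length_F
    by (simp add: T_def take_Suc_conv_app_nth)
  have "c < length T" "T ! c \<noteq> []" using c Tc length_F by (auto simp: T_def)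
  note max = fill_step_appends_to_max_active[OF this appended]
  show "e < F ! c ! Suc r"
  proof (rule ccontr)
    assume "\<not> e < F ! c ! Suc r"
    have Tc': "T ! c' = filter (\<lambda>x. x \<le> m) (F ! c')"
      using c' length_F by (simp add: T_def nth_trunc)
    have "b \<in> set (T ! c')" using Tc' b m by simp
    moreover have "length (T ! c') < k ! c' + 1"
      using Tc' length_filter_less[OF e] \<open>\<not> e < F ! c ! Suc r\<close> m length_column c' by simp
    ultimately have "c' \<in> active_cols k T"
      using c' length_F unfolding active_cols_def T_def by auto
    then have "last (T ! c') \<le> F ! c ! r" using max Tc c(2) by (auto simp: take_Suc_conv_app_nth)
    moreover have "sorted (T ! c')" using Tc' column_sorted[OF c'] by (simp add: sorted_wrt_filter)
    then have "b \<le> last (T ! c')" using sorted_le_last \<open>b \<in> set (T ! c')\<close> by blast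
    ultimately show False using b(2) by simp
  qed
qed

section \<open>The reading word\<close>

definition is_top :: "nat \<Rightarrow> bool" where
  "is_top x \<longleftrightarrow> (\<exists>j<length k. F ! j ! 0 = x)"

definition letter_of :: "nat \<Rightarrow> letter" where
  "letter_of x = (if is_top x then S (THE j. j < length k \<and> F ! j ! 0 = x) else W)"

definition reading_word :: "letter list" where
  "reading_word = map letter_of [1..<sum_list k + length k + 1]"

lemma length_reading_word: "length reading_word = sum_list k + length k"
  by (simp add: reading_word_def del: upt_Suc)

lemma nth_reading_word: "m < sum_list k + length k \<Longrightarrow> reading_word ! m = letter_of (Suc m)"
  by (simp add: reading_word_def del: upt_Suc)

lemma top_eq_entry_iff:
  assumes "j < length k" "c < length k" "r < length (F ! c)"
  shows "F ! j ! 0 = F ! c ! r \<longleftrightarrow> j = c \<and> r = 0"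
proof
  assume eq: "F ! j ! 0 = F ! c ! r"
  have "F ! j ! 0 \<in> set (F ! j)" using column_nonempty[OF assms(1)] by simp
  then have "j = c" using column_unique[OF assms(1,2)] eq assms(3) by simp
  moreover have "r = 0"
  proof (rule ccontr)
    assume "r \<noteq> 0"
    then have "F ! c ! 0 < F ! c ! r"
      using sorted_wrt_nth_less[of "(<)" "F ! c" 0 r] column_increasing assms(2,3) by auto
    then show False using eq \<open>j = c\<close> by simp
  qed
  ultimately show "j = c \<and> r = 0" ..
qed simp

lemma letter_of_entry:
  assumes "c < length k" "r < length (F ! c)"
  shows "letter_of (F ! c ! r) = (if r = 0 then S c else W)"
proof (cases "r = 0")
  case True
  then have "(THE j. j < length k \<and> F ! j ! 0 = F ! c ! r) = c"
    using top_eq_entry_iff[OF _ assms] assms(1) by (intro the_equality) auto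
  then show ?thesis using True assms(1) unfolding letter_of_def is_top_def by auto
next
  case False
  then show ?thesis using top_eq_entry_iff[OF _ assms] unfolding letter_of_def is_top_def by auto
qed

lemma last_trunc_active_less:
  assumes "noncrossing" "c < length k" "Suc r < length (F ! c)" "F ! c ! Suc r = Suc m"
    "c' \<in> active_cols k (trunc m F)" "c' \<noteq> c"
  shows "last (trunc m F ! c') < F ! c ! r"
proof (rule ccontr)
  assume "\<not> last (trunc m F ! c') < F ! c ! r"
  have c': "c' < length k" "trunc m F ! c' \<noteq> []" "length (trunc m F ! c') < length (F ! c')"
    using assms(5) length_F length_column unfolding active_cols_def by auto
  have Tc': "trunc m F ! c' = filter (\<lambda>x. x \<le> m) (F ! c')"
    using c'(1) length_F by (simp add: nth_trunc)
  define b where "b = last (trunc m F ! c')"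
  have "b \<in> set (F ! c')" "b \<le> m"
    using c'(2) Tc' unfolding b_def by (metis last_in_set mem_Collect_eq set_filter)+
  obtain e where e: "e \<in> set (F ! c')" "\<not> e \<le> m"
    using c'(3) Tc' by (metis filter_id_conv less_irrefl)
  have "F ! c ! r \<in> set (F ! c)" using assms(3) by simp
  then have "b \<noteq> F ! c ! r" using column_unique[OF assms(2) c'(1)] assms(6) \<open>b \<in> set (F ! c')\<close> by blast
  then have "F ! c ! r < b" using \<open>\<not> last (trunc m F ! c') < F ! c ! r\<close> b_def by simp
  then have "e < Suc m"
    using noncrossingD[OF assms(1-3) c'(1) \<open>b \<in> set (F ! c')\<close> e(1)] \<open>b \<le> m\<close> assms(4) by simp
  then show False using e(2) by simp
qed

lemma fill_step_reading_word:
  assumes "noncrossing" "m < sum_list k + length k"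
  shows "fill_step k (Suc m) (reading_word ! m) (trunc m F) = trunc (Suc m) F"
proof -
  obtain c r where pos: "c < length k" "r < length (F ! c)" "F ! c ! r = Suc m"
    using label_position[of "Suc m"] assms(2) by auto
  have letter: "reading_word ! m = (if r = 0 then S c else W)"
    using nth_reading_word[OF assms(2)] letter_of_entry[OF pos(1,2)] pos(3) by simp
  have Tc: "trunc m F ! c = take r (F ! c)" by (rule trunc_at_label(1)[OF pos])
  have lenT: "length (trunc m F) = length k" using length_F by simp
  show ?thesis
  proof (cases r)
    case 0
    have "trunc m F ! c' \<noteq> []" if "c' < c" for c'
    proof -
      have "F ! c' ! 0 < F ! c ! 0" using first_row_increasing that pos(1) by blast
      then have "F ! c' ! 0 < Suc m" using pos(3) 0 by simp
      moreover have "F ! c' ! 0 \<in> set (F ! c')" using column_nonempty that pos(1) by simp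
      ultimately show ?thesis
        using that pos(1) length_F by (auto simp: nth_trunc filter_empty_conv less_Suc_eq_le)
    qed
    then have "fill_step k (Suc m) (S c) (trunc m F) = (trunc m F)[c := [Suc m]]"
      using fill_step_S_first_empty[of c "trunc m F"] Tc pos(1) lenT 0 by simp
    moreover have "take (Suc r) (F ! c) = [Suc m]" using pos 0 by (cases "F ! c") auto
    ultimately show ?thesis using trunc_at_label(2)[OF pos] letter 0 by simp
  next
    case (Suc r')
    have "c \<in> active_cols k (trunc m F)"
      using Tc pos(1,2) lenT length_column Suc unfolding active_cols_def by auto
    moreover have "last (trunc m F ! c) = F ! c ! r'"
      using Tc pos(2) Suc by (simp add: take_Suc_conv_app_nth)
    ultimately have "fill_step k (Suc m) W (trunc m F) = (trunc m F)[c := trunc m F ! c @ [Suc m]]"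
      using last_trunc_active_less[OF assms(1) pos(1), of r' m] pos Suc
      by (intro fill_step_W_unique_max) auto
    moreover have "trunc m F ! c @ [Suc m] = take (Suc r) (F ! c)"
      using Tc pos by (simp add: take_Suc_conv_app_nth)
    ultimately show ?thesis using trunc_at_label(2)[OF pos] letter Suc by simp
  qed
qed

lemma eta_take_reading_word:
  assumes "noncrossing" "1 \<le> m" "m \<le> sum_list k + length k"
  shows "eta k (take m reading_word) = trunc m F"
  using assms(2,3)
proof (induction rule: dec_induct)
  case base
  then have "0 < length k" by (cases k) auto
  then show ?case using eta_take_one trunc_one by simp
next
  case (step n)
  then have n: "1 \<le> n" "n < length reading_word" by (auto simp: length_reading_word)
  have "eta k (take (Suc n) reading_word)
      = fill_step k (Suc n) (reading_word ! n) (eta k (take n reading_word))"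
    using eta_take_Suc[OF n] .
  also have "\<dots> = trunc (Suc n) F"
    using step n fill_step_reading_word[OF assms(1)] by (simp add: length_reading_word)
  finally show ?case .
qed

definition open_cells :: "nat list list \<Rightarrow> int" where
  "open_cells T = (\<Sum>c<length k. if T ! c = [] then 0 else int (k ! c) + 1 - int (length (T ! c)))"

lemma rank_reading_word_take:
  "m \<le> sum_list k + length k \<Longrightarrow>
    sum_list (map (rank_step k) (take m reading_word)) = open_cells (trunc m F)"
proof (induction m)
  case 0
  then show ?case by (simp add: open_cells_def trunc_zero)
next
  case (Suc m)
  then have m: "m < sum_list k + length k" by simp
  obtain c r where pos: "c < length k" "r < length (F ! c)" "F ! c ! r = Suc m"
    using label_position[of "Suc m"] m by auto
  define g where "g c (v :: nat list) = (if v = [] then 0 else int (k ! c) + 1 - int (length v))" for c v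
  have "open_cells (trunc (Suc m) F)
      = open_cells (trunc m F) + (g c (take (Suc r) (F ! c)) - g c (take r (F ! c)))"
    unfolding open_cells_def trunc_at_label(2)[OF pos] g_def[symmetric]
    using sum_nth_list_update[of c "length k" "trunc m F" g] pos(1) length_F trunc_at_label(1)[OF pos]
    by simp
  also have "g c (take (Suc r) (F ! c)) - g c (take r (F ! c)) = rank_step k (reading_word ! m)"
    using nth_reading_word[OF m] letter_of_entry[OF pos(1,2)] pos by (auto simp: g_def)
  finally show ?case
    using Suc m by (simp add: take_Suc_conv_app_nth length_reading_word)
qed

lemma open_cells_trunc_nonneg: "0 \<le> open_cells (trunc m F)"
  unfolding open_cells_def
proof (rule sum_nonneg)
  fix c assume "c \<in> {..<length k}"
  then have "length (trunc m F ! c) \<le> length (F ! c)"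
    using length_F by (simp add: nth_trunc)
  then have "length (trunc m F ! c) \<le> k ! c + 1"
    using length_column \<open>c \<in> {..<length k}\<close> by simp
  then show "0 \<le> (if trunc m F ! c = [] then 0 else int (k ! c) + 1 - int (length (trunc m F ! c)))"
    by simp
qed

lemma filter_is_top: "filter is_top [1..<sum_list k + length k + 1] = map (\<lambda>j. F ! j ! 0) [0..<length k]"
proof (rule sorted_distinct_set_unique)
  have "sorted_wrt (<) (map (\<lambda>j. F ! j ! 0) [0..<length k])"
    using first_row_increasing by (simp add: sorted_wrt_iff_nth_less)
  then show "sorted (map (\<lambda>j. F ! j ! 0) [0..<length k])" "distinct (map (\<lambda>j. F ! j ! 0) [0..<length k])"
    by (auto simp: strict_sorted_iff)
  have "F ! j ! 0 \<in> {1 .. sum_list k + length k}" if "j < length k" for j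
    using entry_label[OF that] column_nonempty[OF that] by simp
  then show "set (filter is_top [1..<sum_list k + length k + 1]) = set (map (\<lambda>j. F ! j ! 0) [0..<length k])"
    by (auto simp: is_top_def less_Suc_eq_le simp del: upt_Suc)
  show "sorted (filter is_top [1..<sum_list k + length k + 1])"
    by (intro sorted_wrt_filter) (simp del: upt_Suc)
qed simp

lemma reading_word_dyck: "reading_word \<in> dyck_paths k"
proof -
  have "filter (\<lambda>x. x \<noteq> W) reading_word = map letter_of (filter is_top [1..<sum_list k + length k + 1])"
    unfolding reading_word_def filter_map by (auto simp: letter_of_def o_def intro!: filter_cong)
  also have "\<dots> = map (letter_of \<circ> (\<lambda>j. F ! j ! 0)) [0..<length k]"
    unfolding filter_is_top by simp
  also have "\<dots> = map S [0..<length k]"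
    using letter_of_entry[of _ 0] column_nonempty by (intro map_cong) auto
  finally have tops: "filter (\<lambda>x. x \<noteq> W) reading_word = map S [0..<length k]" .
  then have "length (filter (\<lambda>x. x = W) reading_word) = sum_list k"
    using sum_length_filter_compl[of "\<lambda>x. x = W" reading_word] length_reading_word by simp
  moreover have "\<forall>i < length reading_word. 0 \<le> sum_list (map (rank_step k) (take i reading_word))"
    using rank_reading_word_take open_cells_trunc_nonneg length_reading_word by simp
  ultimately show ?thesis using tops unfolding dyck_paths_def by simp
qed

lemma eta_reading_word:
  assumes "noncrossing"
  shows "eta k reading_word = F"
proof (cases "k = []")
  case True
  have "reading_word = []" unfolding reading_word_def using True by simp
  then show ?thesis using True length_F by (simp add: eta_def)
next
  case False
  then have "1 \<le> sum_list k + length k" by (cases k) auto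
  then show ?thesis
    using eta_take_reading_word[OF assms _ order.refl] trunc_all length_reading_word by simp
qed

lemma eta_image_iff_noncrossing: "(\<exists>\<pi> \<in> dyck_paths k. eta k \<pi> = F) \<longleftrightarrow> noncrossing"
  using noncrossing_if_eta eta_reading_word reading_word_dyck by blast

end

theorem lemma3p10:
  fixes k :: "nat list" and F :: "nat list list"
  assumes kpos: "\<forall>x \<in> set k. 0 < x"
    and len: "length F = length k"
    and collen: "\<forall>i < length k. length (F ! i) = k ! i + 1"
    and bij: "distinct (concat F)" "set (concat F) = {1 .. sum_list k + length k}"
    and row: "\<forall>i j. i < j \<and> j < length k \<longrightarrow> F ! i ! 0 < F ! j ! 0"
    and col: "\<forall>i < length k. sorted_wrt (<) (F ! i)"
  shows "(\<exists>\<pi> \<in> dyck_paths k. eta k \<pi> = F) \<longleftrightarrow>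
         (\<forall>i < length k. \<forall>r. r + 1 < length (F ! i) \<longrightarrow>
            F ! i ! r < F ! i ! (r + 1) - 1 \<longrightarrow>
            (\<exists>C \<subseteq> {..<length k}.
               {F ! i ! r + 1 .. F ! i ! (r + 1) - 1} = (\<Union>c\<in>C. set (F ! c))))"
proof -
  interpret increasing_tableau k F
    using len collen bij row col by unfold_locales
  have "gaps_are_columns \<longleftrightarrow> noncrossing"
    using noncrossing_if_gaps_are_columns gaps_are_columns_if_noncrossing by blast
  then show ?thesis using eta_image_iff_noncrossing unfolding gaps_are_columns_def by simp
qed

end
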